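(* Let $\mathcal{N}_1:\mathcal{L}(\mathcal{H}_{a1})\to\mathcal{L}(\mathcal{H}_{b1})$ and $\mathcal{N}_2:\mathcal{L}(\mathcal{H}_{a2})\to\mathcal{L}(\mathcal{H}_{b2})$ be quantum channels with $\dim\mathcal{H}_{ai}=\dim\mathcal{H}_{bi}=d_i$, and let $0<t\le1$. If $t\ge\max(1/d_1^2,1/d_2^2)$ then $$\mathcal{O}_t(\mathcal{N}_1\otimes\mathcal{N}_2)\ge\mathcal{O}_t(\mathcal{N}_1)\,\mathcal{O}_t(\mathcal{N}_2),$$ and if $\sqrt t\ge\max(1/d_1^2,1/d_2^2)$ then $$\mathcal{O}_t(\mathcal{N}_1\otimes\mathcal{N}_2)\ge\mathcal{O}_{\sqrt t}(\mathcal{N}_1)\,\mathcal{O}_{\sqrt t}(\mathcal{N}_2).$$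
   Context: For a channel $\mathcal{N}:\mathcal{L}(\mathcal{H}_a)\to\mathcal{L}(\mathcal{H}_b)$ with $\dim\mathcal{H}_a=\dim\mathcal{H}_b=\dim\mathcal{H}_r=d$, define $\mathcal{O}_s(\mathcal{N})=\max\{\langle\phi_{rb}|(\mathrm{id}_r\otimes\mathcal{N})(\rho_{ra})|\phi_{rb}\rangle:\ \rho_{ra}\succeq0,\ \mathrm{Tr}\rho_{ra}=1,\ \mathrm{Tr}(\rho_{ra}^2)\le s\}$, where $|\phi_{rb}\rangle=\frac1{\sqrt d}\sum_i|\alpha_i\rangle_r|\alpha_i\rangle_b$. For $\mathcal{N}_1\otimes\mathcal{N}_2$ the reference is $\mathcal{H}_r=\mathcal{H}_{r1}\otimes\mathcal{H}_{r2}$ and the maximally entangled state is $\phi_{r1b1}\otimes\phi_{r2b2}$. *)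

theory Defs
  imports "Jordan_Normal_Form.Matrix"
begin

(* Operators on a d-dimensional Hilbert space are d x d complex matrices
   (w.r.t. a fixed orthonormal basis, the standard basis).
   Composite systems H_1 (x) H_2 use the index convention  (i, k) |-> i * d2 + k. *)

definition mtrace :: "complex mat \<Rightarrow> complex" where
  "mtrace A = (\<Sum>i<dim_row A. A $$ (i, i))"

definition psd :: "nat \<Rightarrow> complex mat \<Rightarrow> bool" where
  "psd n A \<longleftrightarrow> A \<in> carrier_mat n n \<and>
     (\<forall>i<n. \<forall>j<n. A $$ (i, j) = cnj (A $$ (j, i))) \<and>
     (\<forall>v \<in> carrier_vec n. 0 \<le> Re ((A *\<^sub>v v) \<bullet>c v))"

definition density_op :: "nat \<Rightarrow> complex mat \<Rightarrow> bool" where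
  "density_op n \<rho> \<longleftrightarrow> psd n \<rho> \<and> mtrace \<rho> = 1"

definition kron :: "complex mat \<Rightarrow> complex mat \<Rightarrow> complex mat" where
  "kron A B = mat (dim_row A * dim_row B) (dim_col A * dim_col B)
     (\<lambda>(i, j). A $$ (i div dim_row B, j div dim_col B) * B $$ (i mod dim_row B, j mod dim_col B))"

definition unit_mat :: "nat \<Rightarrow> nat \<Rightarrow> nat \<Rightarrow> complex mat" where
  "unit_mat d i j = mat d d (\<lambda>(a, b). if a = i \<and> b = j then 1 else 0)"

definition block :: "nat \<Rightarrow> complex mat \<Rightarrow> nat \<Rightarrow> nat \<Rightarrow> complex mat" where
  "block d X i j = mat d d (\<lambda>(a, b). X $$ (i * d + a, j * d + b))"

definition id_tensor :: "nat \<Rightarrow> nat \<Rightarrow> (complex mat \<Rightarrow> complex mat) \<Rightarrow> complex mat \<Rightarrow> complex mat" where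
  "id_tensor k d N X = mat (k * d) (k * d)
     (\<lambda>(r, c). N (block d X (r div d) (c div d)) $$ (r mod d, c mod d))"

definition channel :: "nat \<Rightarrow> (complex mat \<Rightarrow> complex mat) \<Rightarrow> bool" where
  "channel d N \<longleftrightarrow>
     (\<forall>A \<in> carrier_mat d d. N A \<in> carrier_mat d d) \<and>
     (\<forall>A \<in> carrier_mat d d. \<forall>B \<in> carrier_mat d d. N (A + B) = N A + N B) \<and>
     (\<forall>A \<in> carrier_mat d d. \<forall>c. N (c \<cdot>\<^sub>m A) = c \<cdot>\<^sub>m N A) \<and>
     (\<forall>k X. psd (k * d) X \<longrightarrow> psd (k * d) (id_tensor k d N X)) \<and>
     (\<forall>A \<in> carrier_mat d d. mtrace (N A) = mtrace A)"

(* N1 (x) N2, defined by linear extension of  E_ij (x) E_kl |-> N1(E_ij) (x) N2(E_kl) *)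
definition chan_tensor :: "nat \<Rightarrow> nat \<Rightarrow> (complex mat \<Rightarrow> complex mat) \<Rightarrow> (complex mat \<Rightarrow> complex mat)
    \<Rightarrow> complex mat \<Rightarrow> complex mat" where
  "chan_tensor d1 d2 N1 N2 X = mat (d1 * d2) (d1 * d2) (\<lambda>(r, c).
     \<Sum>i<d1. \<Sum>j<d1. \<Sum>k<d2. \<Sum>l<d2.
        X $$ (i * d2 + k, j * d2 + l) *
        kron (N1 (unit_mat d1 i j)) (N2 (unit_mat d2 k l)) $$ (r, c))"

definition max_ent :: "nat \<Rightarrow> complex vec" where
  "max_ent d = vec (d * d) (\<lambda>n. if n div d = n mod d then complex_of_real (1 / sqrt (real d)) else 0)"

definition O_val :: "nat \<Rightarrow> (complex mat \<Rightarrow> complex mat) \<Rightarrow> real \<Rightarrow> real" where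
  "O_val d N s = Sup {Re ((id_tensor d d N \<rho> *\<^sub>v max_ent d) \<bullet>c max_ent d) | \<rho>.
      density_op (d * d) \<rho> \<and> Re (mtrace (\<rho> * \<rho>)) \<le> s}"

end

theory Submission
  imports Defs
begin

(* Feasible states tensorise. If rho1 and rho2 are density operators of purity at most s, then
   rho1 (x) rho2, with its reference and output registers regrouped, is a density operator of
   purity Tr(rho1^2) Tr(rho2^2) <= s^2, and its entanglement fidelity for N1 (x) N2 is the product
   of the two fidelities. Taking suprema gives O_t(N1 (x) N2) >= O_s(N1) O_s(N2) whenever s^2 <= t,
   which covers both s = t and s = sqrt t. The bound s >= 1/d_i^2 makes the maximally mixed state
   feasible, so the suprema range over nonempty sets; positivity of the product state comes from
   Gram (Cholesky) decompositions of rho1 and rho2. *)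

section \<open>Index arithmetic and finite sums\<close>

lemma sum_lessThan_mult:
  fixes g :: "nat \<Rightarrow> 'a::comm_monoid_add"
  shows "(\<Sum>n<a * b. g n) = (\<Sum>i<a. \<Sum>j<b. g (i * b + j))"
proof (induction a)
  case 0
  then show ?case by simp
next
  case (Suc a)
  have "{..<Suc a * b} = {..<a * b} \<union> {a * b..<a * b + b}" by auto
  then have "(\<Sum>n<Suc a * b. g n) = (\<Sum>n<a * b. g n) + (\<Sum>n\<in>{a * b..<a * b + b}. g n)"
    by (simp add: sum.union_disjoint ivl_disj_int)
  also have "(\<Sum>n\<in>{a * b..<a * b + b}. g n) = (\<Sum>j<b. g (a * b + j))"
    using sum.shift_bounds_nat_ivl[of g 0 "a * b" b] by (simp add: lessThan_atLeast0 add.commute)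
  finally show ?case using Suc by simp
qed

lemma mult_add_less_mult:
  fixes i j a b :: nat
  assumes "i < a" "j < b"
  shows "i * b + j < a * b"
proof -
  have "i * b + j < Suc i * b" using assms by simp
  also have "\<dots> \<le> a * b" using assms by (intro mult_le_mono1) simp
  finally show ?thesis .
qed

lemma sum_div_mod_mult:
  fixes X Y :: "nat \<Rightarrow> 'a::comm_semiring_0"
  shows "(\<Sum>a<d1 * d2. X (a div d2) * Y (a mod d2)) = (\<Sum>a<d1. X a) * (\<Sum>b<d2. Y b)"
  by (simp add: sum_lessThan_mult sum_product)

lemma sum4_div_mod_mult:
  fixes F1 F2 :: "nat \<Rightarrow> nat \<Rightarrow> nat \<Rightarrow> nat \<Rightarrow> 'a::comm_semiring_0"
  shows "(\<Sum>a<d1 * d2. \<Sum>b<d1 * d2. \<Sum>p<d1 * d2. \<Sum>q<d1 * d2.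
            F1 (a div d2) (b div d2) (p div d2) (q div d2) *
            F2 (a mod d2) (b mod d2) (p mod d2) (q mod d2))
       = (\<Sum>a<d1. \<Sum>b<d1. \<Sum>p<d1. \<Sum>q<d1. F1 a b p q) *
         (\<Sum>a<d2. \<Sum>b<d2. \<Sum>p<d2. \<Sum>q<d2. F2 a b p q)"
  by (simp only:
    sum_div_mod_mult[where X = "\<lambda>q. F1 _ _ _ q" and Y = "\<lambda>q. F2 _ _ _ q"]
    sum_div_mod_mult[where X = "\<lambda>p. \<Sum>q<d1. F1 _ _ p q" and Y = "\<lambda>p. \<Sum>q<d2. F2 _ _ p q"]
    sum_div_mod_mult[where X = "\<lambda>b. \<Sum>p<d1. \<Sum>q<d1. F1 _ b p q"
      and Y = "\<lambda>b. \<Sum>p<d2. \<Sum>q<d2. F2 _ b p q"]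
    sum_div_mod_mult[where X = "\<lambda>a. \<Sum>b<d1. \<Sum>p<d1. \<Sum>q<d1. F1 a b p q"
      and Y = "\<lambda>a. \<Sum>b<d2. \<Sum>p<d2. \<Sum>q<d2. F2 a b p q"])

lemma norm_sum4_le:
  fixes f :: "nat \<Rightarrow> nat \<Rightarrow> nat \<Rightarrow> nat \<Rightarrow> 'a::real_normed_vector"
  shows "norm (\<Sum>a<d. \<Sum>b<d. \<Sum>p<d. \<Sum>q<d. f a b p q)
    \<le> (\<Sum>a<d. \<Sum>b<d. \<Sum>p<d. \<Sum>q<d. norm (f a b p q))"
  by (intro order.trans[OF norm_sum] sum_mono order.refl)

section \<open>Positive semidefinite kernels\<close>

definition quad_form :: "nat \<Rightarrow> (nat \<Rightarrow> nat \<Rightarrow> complex) \<Rightarrow> (nat \<Rightarrow> complex) \<Rightarrow> complex" where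
  "quad_form n f v = (\<Sum>p<n. \<Sum>q<n. f p q * v q * cnj (v p))"

definition psd_form :: "nat \<Rightarrow> (nat \<Rightarrow> nat \<Rightarrow> complex) \<Rightarrow> bool" where
  "psd_form n f \<longleftrightarrow> (\<forall>p<n. \<forall>q<n. f p q = cnj (f q p)) \<and> (\<forall>v. 0 \<le> Re (quad_form n f v))"

lemma cscalar_prod_mult_mat_vec_quad_form:
  assumes "A \<in> carrier_mat n n" "v \<in> carrier_vec n"
  shows "(A *\<^sub>v v) \<bullet>c v = quad_form n (\<lambda>p q. A $$ (p, q)) (\<lambda>i. v $ i)"
  using assms unfolding quad_form_def scalar_prod_def mult_mat_vec_def conjugate_vec_def row_def
  by (simp add: lessThan_atLeast0 sum_distrib_right)

lemma psd_iff_psd_form: "psd n A \<longleftrightarrow> A \<in> carrier_mat n n \<and> psd_form n (\<lambda>p q. A $$ (p, q))"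
proof (cases "A \<in> carrier_mat n n")
  case A: True
  have "(\<forall>v \<in> carrier_vec n. 0 \<le> Re ((A *\<^sub>v v) \<bullet>c v))
      \<longleftrightarrow> (\<forall>v. 0 \<le> Re (quad_form n (\<lambda>p q. A $$ (p, q)) v))"
  proof
    assume pos: "\<forall>v \<in> carrier_vec n. 0 \<le> Re ((A *\<^sub>v v) \<bullet>c v)"
    have "quad_form n f (($) (vec n v)) = quad_form n f v" for f v
      unfolding quad_form_def by (intro sum.cong refl) simp
    then show "\<forall>v. 0 \<le> Re (quad_form n (\<lambda>p q. A $$ (p, q)) v)"
      using pos cscalar_prod_mult_mat_vec_quad_form[OF A] by (metis vec_carrier)
  qed (simp add: cscalar_prod_mult_mat_vec_quad_form[OF A])
  then show ?thesis using A unfolding psd_def psd_form_def by blast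
qed (simp add: psd_def)

lemma psd_form_hermitian: "psd_form n f \<Longrightarrow> p < n \<Longrightarrow> q < n \<Longrightarrow> f p q = cnj (f q p)"
  unfolding psd_form_def by blast

lemma psd_form_nonneg: "psd_form n f \<Longrightarrow> 0 \<le> Re (quad_form n f v)"
  unfolding psd_form_def by blast

lemma quad_form_real:
  assumes "psd_form n f"
  shows "Im (quad_form n f v) = 0"
proof -
  have "cnj (f p q * v q * cnj (v p)) = f q p * v p * cnj (v q)" if "p \<in> {..<n}" "q \<in> {..<n}" for p q
    using psd_form_hermitian[OF assms, of q p] that by simp
  then have "cnj (quad_form n f v) = (\<Sum>p<n. \<Sum>q<n. f q p * v p * cnj (v q))"
    unfolding quad_form_def cnj_sum by (intro sum.cong refl)
  also have "\<dots> = quad_form n f v"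
    unfolding quad_form_def by (rule sum.swap)
  finally show ?thesis by (simp add: complex_eq_iff)
qed

lemma psd_form_Gram:
  assumes "finite S" "\<forall>p<n. \<forall>q<n. f p q = (\<Sum>s\<in>S. z s p * cnj (z s q))"
  shows "psd_form n f"
proof -
  have "0 \<le> Re (quad_form n f v)" for v
  proof -
    define w where "w s = (\<Sum>p<n. z s p * cnj (v p))" for s
    have "f p q * v q * cnj (v p) = (\<Sum>s\<in>S. (z s p * cnj (v p)) * (cnj (z s q) * v q))"
      if "p \<in> {..<n}" "q \<in> {..<n}" for p q
      using assms(2) that by (simp add: sum_distrib_left sum_distrib_right mult_ac)
    then have "quad_form n f v = (\<Sum>p<n. \<Sum>q<n. \<Sum>s\<in>S. (z s p * cnj (v p)) * (cnj (z s q) * v q))"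
      unfolding quad_form_def by (intro sum.cong refl)
    also have "\<dots> = (\<Sum>s\<in>S. \<Sum>p<n. \<Sum>q<n. (z s p * cnj (v p)) * (cnj (z s q) * v q))"
      by (rule trans[OF sum.cong[OF refl sum.swap] sum.swap])
    also have "\<dots> = (\<Sum>s\<in>S. w s * cnj (w s))"
      by (simp add: w_def sum_product)
    finally show ?thesis by (simp add: complex_mult_cnj sum_nonneg)
  qed
  moreover have "\<forall>p<n. \<forall>q<n. f p q = cnj (f q p)"
    using assms(2) by (auto simp: mult.commute)
  ultimately show ?thesis unfolding psd_form_def by blast
qed

lemma quad_form_supported:
  assumes "S \<subseteq> {..<n}" "\<And>x. x < n \<Longrightarrow> x \<notin> S \<Longrightarrow> v x = 0"
  shows "quad_form n f v = (\<Sum>p\<in>S. \<Sum>q\<in>S. f p q * v q * cnj (v p))"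
proof -
  have fin: "finite {..<n}" by simp
  have "quad_form n f v = (\<Sum>p\<in>S. \<Sum>q<n. f p q * v q * cnj (v p))"
    unfolding quad_form_def by (rule sum.mono_neutral_right[OF fin assms(1)]) (simp add: assms(2))
  also have "\<dots> = (\<Sum>p\<in>S. \<Sum>q\<in>S. f p q * v q * cnj (v p))"
    by (rule sum.cong[OF refl], rule sum.mono_neutral_right[OF fin assms(1)]) (simp add: assms(2))
  finally show ?thesis .
qed

lemma psd_form_diag:
  assumes "psd_form n f" "k < n"
  shows "f k k = of_real (Re (f k k))" "0 \<le> Re (f k k)"
proof -
  have "f k k = cnj (f k k)" by (rule psd_form_hermitian[OF assms(1,2,2)])
  then show "f k k = of_real (Re (f k k))" by (simp add: complex_eq_iff)
  have "quad_form n f (\<lambda>x. if x = k then 1 else 0) = f k k"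
    by (subst quad_form_supported[of "{k}"]) (use assms(2) in auto)
  then show "0 \<le> Re (f k k)" using psd_form_nonneg[OF assms(1)] by metis
qed

(* With f k k = 0 the form is affine in the weight a on coordinate k of a e_k + e_q, so it can
   only stay nonnegative if f k q = 0. *)
lemma psd_form_diag_zero:
  assumes f: "psd_form n f" and k: "k < n" and q: "q < n" and fkk: "f k k = 0"
  shows "f k q = 0"
proof (rule ccontr)
  define c where "c = f k q"
  assume "f k q \<noteq> 0"
  then have "k \<noteq> q" "c \<noteq> 0" using fkk by (auto simp: c_def)
  define a where "a = - c * of_real ((Re (f q q) + 1) / (cmod c)\<^sup>2)"
  have ca: "c * cnj a = - of_real (Re (f q q) + 1)"
    using \<open>c \<noteq> 0\<close> unfolding a_def by (simp add: mult.assoc[symmetric] flip: complex_norm_square)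
  have "quad_form n f (\<lambda>x. if x = k then a else if x = q then 1 else 0)
      = c * cnj a + cnj (c * cnj a) + f q q"
    by (subst quad_form_supported[of "{k, q}"])
      (use k q \<open>k \<noteq> q\<close> fkk psd_form_hermitian[OF f q k] in \<open>auto simp: c_def mult_ac\<close>)
  then have "0 \<le> - Re (f q q) - 2"
    using psd_form_nonneg[OF f, of "\<lambda>x. if x = k then a else if x = q then 1 else 0"] ca by simp
  then show False using psd_form_diag(2)[OF f q] by linarith
qed

lemma psd_form_Schur_complement:
  assumes f: "psd_form n f" and k: "k < n" and fkk: "f k k \<noteq> 0"
  shows "psd_form n (\<lambda>p q. f p q - f p k * f k q / f k k)"
proof -
  define g where "g p q = f p q - f p k * f k q / f k k" for p q
  have real: "cnj (f k k) = f k k"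
    using psd_form_diag(1)[OF f k] by (metis complex_cnj_complex_of_real)
  have herm: "g p q = cnj (g q p)" if "p < n" "q < n" for p q
    using psd_form_hermitian[OF f that] psd_form_hermitian[OF f that(1) k]
      psd_form_hermitian[OF f k that(2)] real
    by (simp add: g_def mult.commute)
  have "0 \<le> Re (quad_form n g v)" for v
  proof -
    (* Shifting coordinate k of v does not change the form g, and for this shift the rank-one
       part f p k f k q / f k k of g vanishes. *)
    define \<delta> where "\<delta> = - (\<Sum>q<n. f k q * v q) / f k k"
    define u where "u = v(k := v k + \<delta>)"
    have "quad_form n g v = quad_form n g u"
      unfolding quad_form_def u_def g_def using fkk by (intro sum.cong refl) auto
    also have "\<dots> = quad_form n f u - (\<Sum>p<n. f p k * cnj (u p)) * (\<Sum>q<n. f k q * u q) / f k k"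
      unfolding quad_form_def g_def sum_product sum_divide_distrib sum_subtractf[symmetric]
      by (intro sum.cong refl) (simp add: algebra_simps)
    also have "(\<Sum>q<n. f k q * u q) = (\<Sum>q<n. f k q * v q + (if q = k then f k k * \<delta> else 0))"
      unfolding u_def by (intro sum.cong refl) (simp add: algebra_simps)
    also have "\<dots> = 0"
      using k fkk by (simp add: sum.distrib \<delta>_def)
    finally show ?thesis using psd_form_nonneg[OF f] by simp
  qed
  then show ?thesis unfolding psd_form_def g_def[symmetric] using herm by blast
qed

(* Cholesky elimination: row and column k are cleared by splitting off a rank-one term,
   the remainder being the Schur complement. *)
lemma psd_form_Gram_decomposition_from:
  assumes "psd_form n f" "\<forall>p<n. \<forall>q<n. p < k \<or> q < k \<longrightarrow> f p q = 0"
  shows "\<exists>(m::nat) z. \<forall>p<n. \<forall>q<n. f p q = (\<Sum>s<m. z s p * cnj (z s q))"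
  using assms
proof (induction "n - k" arbitrary: k f)
  case 0
  then show ?case by (intro exI[of _ 0]) auto
next
  case (Suc j)
  then have k: "k < n" and j: "j = n - Suc k" by simp_all
  show ?case
  proof (cases "f k k = 0")
    case True
    have "f k q = 0" "f q k = 0" if "q < n" for q
      using psd_form_diag_zero[OF Suc.prems(1) k that True]
        psd_form_hermitian[OF Suc.prems(1) that k] by simp_all
    then have "\<forall>p<n. \<forall>q<n. p < Suc k \<or> q < Suc k \<longrightarrow> f p q = 0"
      using Suc.prems(2) by (auto simp: less_Suc_eq)
    then show ?thesis using Suc.hyps(1)[OF j Suc.prems(1)] by blast
  next
    case False
    define r where "r = Re (f k k)"
    define w where "w p = f p k / of_real (sqrt r)" for p
    define g where "g p q = f p q - f p k * f k q / f k k" for p q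
    have fkk: "f k k = of_real r" and "0 \<le> r"
      unfolding r_def by (rule psd_form_diag[OF Suc.prems(1) k])+
    then have "0 < r" using False by fastforce
    have fg: "f p q = g p q + w p * cnj (w q)" if "q < n" for p q
      using psd_form_hermitian[OF Suc.prems(1) that k] \<open>0 < r\<close> fkk
      by (simp add: g_def w_def flip: of_real_mult)
    have "psd_form n g"
      unfolding g_def by (rule psd_form_Schur_complement[OF Suc.prems(1) k False])
    moreover have "\<forall>p<n. \<forall>q<n. p < Suc k \<or> q < Suc k \<longrightarrow> g p q = 0"
      using Suc.prems(2) False k by (auto simp: g_def less_Suc_eq)
    ultimately obtain m :: nat and z where "\<forall>p<n. \<forall>q<n. g p q = (\<Sum>s<m. z s p * cnj (z s q))"
      using Suc.hyps(1)[OF j] by blast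
    then have "\<forall>p<n. \<forall>q<n. f p q = (\<Sum>s<Suc m. (z(m := w)) s p * cnj ((z(m := w)) s q))"
      using fg by simp
    then show ?thesis by blast
  qed
qed

lemma psd_Gram_decomposition:
  "psd n A \<Longrightarrow> \<exists>(m::nat) z. \<forall>p<n. \<forall>q<n. A $$ (p, q) = (\<Sum>s<m. z s p * cnj (z s q))"
  unfolding psd_iff_psd_form by (intro psd_form_Gram_decomposition_from[where k = 0]) auto

section \<open>Purity\<close>

lemma mtrace_mult_self:
  assumes "A \<in> carrier_mat n n"
  shows "mtrace (A * A) = (\<Sum>i<n. \<Sum>j<n. A $$ (i, j) * A $$ (j, i))"
  using assms by (simp add: mtrace_def scalar_prod_def lessThan_atLeast0)

lemma mtrace_mult_self_psd:
  assumes "psd n A"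
  shows "mtrace (A * A) = of_real (\<Sum>i<n. \<Sum>j<n. (cmod (A $$ (i, j)))\<^sup>2)"
proof -
  have A: "A \<in> carrier_mat n n" and herm: "psd_form n (\<lambda>i j. A $$ (i, j))"
    using assms unfolding psd_iff_psd_form by blast+
  have "A $$ (i, j) * A $$ (j, i) = of_real ((cmod (A $$ (i, j)))\<^sup>2)"
    if "i \<in> {..<n}" "j \<in> {..<n}" for i j
    using psd_form_hermitian[OF herm, of j i] that by (simp flip: complex_norm_square)
  then show ?thesis
    unfolding mtrace_mult_self[OF A] of_real_sum by (intro sum.cong refl)
qed

lemma Re_mtrace_mult_self_nonneg: "psd n A \<Longrightarrow> 0 \<le> Re (mtrace (A * A))"
  by (simp add: mtrace_mult_self_psd sum_nonneg)

lemma psd_entry_norm_le_1: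
  assumes "psd n A" "Re (mtrace (A * A)) \<le> 1" "i < n" "j < n"
  shows "cmod (A $$ (i, j)) \<le> 1"
proof -
  have "(cmod (A $$ (i, j)))\<^sup>2 \<le> (\<Sum>j'<n. (cmod (A $$ (i, j')))\<^sup>2)"
    using assms(4) by (intro member_le_sum) auto
  also have "\<dots> \<le> (\<Sum>i'<n. \<Sum>j'<n. (cmod (A $$ (i', j')))\<^sup>2)"
    using assms(3) by (intro member_le_sum[where f = "\<lambda>i'. \<Sum>j'<n. (cmod (A $$ (i', j')))\<^sup>2"])
      (auto intro: sum_nonneg)
  also have "\<dots> \<le> 1"
    using assms(2) unfolding mtrace_mult_self_psd[OF assms(1)] by simp
  finally show ?thesis by (simp add: power_le_one_iff)
qed

definition max_mixed :: "nat \<Rightarrow> complex mat" where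
  "max_mixed n = mat n n (\<lambda>(i, j). if i = j then 1 / of_nat n else 0)"

lemma max_mixed_density_op_purity:
  assumes "0 < n"
  shows "density_op n (max_mixed n)" "Re (mtrace (max_mixed n * max_mixed n)) = 1 / real n"
proof -
  define z where "z s p = (if p = s then complex_of_real (1 / sqrt (real n)) else 0)" for s p :: nat
  have "z s p * cnj (z s q) = (if s = p then (if p = q then 1 / of_nat n else 0) else 0)" for s p q
    using assms by (simp add: z_def flip: of_real_mult)
  then have "max_mixed n $$ (p, q) = (\<Sum>s<n. z s p * cnj (z s q))" if "p < n" "q < n" for p q
    using that by (simp add: max_mixed_def)
  then have psd: "psd n (max_mixed n)"
    unfolding psd_iff_psd_form by (auto simp: max_mixed_def intro!: psd_form_Gram[of "{..<n}"])
  moreover have "mtrace (max_mixed n) = 1"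
    using assms by (simp add: mtrace_def max_mixed_def)
  ultimately show "density_op n (max_mixed n)"
    unfolding density_op_def by simp
  have "(cmod (max_mixed n $$ (i, j)))\<^sup>2 = (if i = j then 1 / (real n)\<^sup>2 else 0)"
    if "i < n" "j < n" for i j
    using that by (simp add: max_mixed_def norm_divide power_divide)
  then have "(\<Sum>i<n. \<Sum>j<n. (cmod (max_mixed n $$ (i, j)))\<^sup>2) = (\<Sum>i<n. 1 / (real n)\<^sup>2)"
    by simp
  then show "Re (mtrace (max_mixed n * max_mixed n)) = 1 / real n"
    unfolding mtrace_mult_self_psd[OF psd] by (simp add: power2_eq_square)
qed

section \<open>Entanglement fidelity\<close>

lemma linear_mat_map_entry:
  assumes closed: "\<forall>A \<in> carrier_mat d d. N A \<in> carrier_mat d d"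
    and add: "\<forall>A \<in> carrier_mat d d. \<forall>B \<in> carrier_mat d d. N (A + B) = N A + N B"
    and smult: "\<forall>A \<in> carrier_mat d d. \<forall>c. N (c \<cdot>\<^sub>m A) = c \<cdot>\<^sub>m N A"
    and Y: "Y \<in> carrier_mat d d" and a: "a < d" and b: "b < d"
  shows "N Y $$ (a, b) = (\<Sum>p<d. \<Sum>q<d. Y $$ (p, q) * N (unit_mat d p q) $$ (a, b))"
proof -
  define restr where "restr S = mat d d (\<lambda>pq. if pq \<in> S then Y $$ pq else 0)" for S
  have restr_carrier: "restr S \<in> carrier_mat d d" for S
    by (simp add: restr_def)
  have unit_carrier: "unit_mat d p q \<in> carrier_mat d d" for p q
    by (simp add: unit_mat_def)
  have partial: "N (restr S) $$ (a, b) = (\<Sum>(p, q)\<in>S. Y $$ (p, q) * N (unit_mat d p q) $$ (a, b))"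
    if "finite S" "S \<subseteq> {..<d} \<times> {..<d}" for S
    using that
  proof (induction S rule: finite_subset_induct)
    case empty
    have "N (0\<^sub>m d d) = 0 \<cdot>\<^sub>m N (0\<^sub>m d d)"
      using smult[rule_format, OF zero_carrier_mat, of 0] by (simp only: smult_zero_mat)
    moreover have "(0 \<cdot>\<^sub>m N (0\<^sub>m d d)) $$ (a, b) = 0"
      using closed[rule_format, OF zero_carrier_mat] a b by simp
    moreover have "restr {} = 0\<^sub>m d d"
      by (rule eq_matI) (simp_all add: restr_def)
    ultimately show ?case by simp
  next
    case (insert pq S)
    obtain p q where pq: "pq = (p, q)" by fastforce
    have "restr (insert pq S) = restr S + Y $$ (p, q) \<cdot>\<^sub>m unit_mat d p q"
      using insert.hyps(3) by (intro eq_matI) (auto simp: restr_def unit_mat_def pq)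
    then have "N (restr (insert pq S)) = N (restr S) + Y $$ (p, q) \<cdot>\<^sub>m N (unit_mat d p q)"
      using add smult restr_carrier unit_carrier by simp
    then show ?case
      using insert.IH insert.hyps closed[rule_format, OF restr_carrier[of S]]
        closed[rule_format, OF unit_carrier[of p q]] a b by (simp add: pq)
  qed
  have "restr ({..<d} \<times> {..<d}) = Y"
    using Y by (intro eq_matI) (auto simp: restr_def)
  then have "N Y $$ (a, b) = (\<Sum>(p, q)\<in>{..<d} \<times> {..<d}. Y $$ (p, q) * N (unit_mat d p q) $$ (a, b))"
    using partial[of "{..<d} \<times> {..<d}"] by simp
  then show ?thesis
    by (simp add: sum.cartesian_product)
qed

lemma channel_entry:
  assumes "channel d N" "Y \<in> carrier_mat d d" "a < d" "b < d"
  shows "N Y $$ (a, b) = (\<Sum>p<d. \<Sum>q<d. Y $$ (p, q) * N (unit_mat d p q) $$ (a, b))"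
  using assms unfolding channel_def by (intro linear_mat_map_entry) blast+

definition ent_fidelity :: "nat \<Rightarrow> (complex mat \<Rightarrow> complex mat) \<Rightarrow> complex mat \<Rightarrow> complex" where
  "ent_fidelity d N \<rho> = (id_tensor d d N \<rho> *\<^sub>v max_ent d) \<bullet>c max_ent d"

lemma cscalar_prod_max_ent:
  assumes X: "X \<in> carrier_mat (d * d) (d * d)"
  shows "(X *\<^sub>v max_ent d) \<bullet>c max_ent d = (\<Sum>a<d. \<Sum>b<d. X $$ (a * d + a, b * d + b)) / of_nat d"
proof -
  define s where "s = complex_of_real (1 / sqrt (real d))"
  define D where "D = (\<lambda>a. a * d + a) ` {..<d}"
  have inj: "inj_on (\<lambda>a. a * d + a) {..<d}"
  proof (rule inj_onI)
    fix a b assume "a * d + a = b * d + b"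
    then have "a * Suc d = b * Suc d" by (simp add: algebra_simps)
    then show "a = b" by (simp only: mult_cancel2) simp
  qed
  have D: "D \<subseteq> {..<d * d}"
    unfolding D_def using mult_add_less_mult by auto
  have diag_iff: "n div d = n mod d \<longleftrightarrow> n \<in> D" if "n < d * d" for n
  proof
    assume "n div d = n mod d"
    then have "n = n div d * d + n div d" by (metis div_mult_mod_eq)
    moreover have "n div d < d" using that by (simp add: less_mult_imp_div_less)
    ultimately show "n \<in> D" unfolding D_def by blast
  qed (auto simp: D_def)
  have on_D: "max_ent d $ n = s" if "n \<in> D" for n
    using that D diag_iff unfolding max_ent_def s_def by auto
  have off_D: "max_ent d $ n = 0" if "n < d * d" "n \<notin> D" for n
    using that diag_iff unfolding max_ent_def by auto
  have "(X *\<^sub>v max_ent d) \<bullet>c max_ent d = quad_form (d * d) (\<lambda>p q. X $$ (p, q)) (($) (max_ent d))"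
    by (rule cscalar_prod_mult_mat_vec_quad_form[OF X]) (simp add: max_ent_def)
  also have "\<dots> = (\<Sum>p\<in>D. \<Sum>q\<in>D. X $$ (p, q) * (s * cnj s))"
    by (subst quad_form_supported[OF D]) (simp_all add: on_D off_D mult_ac)
  also have "\<dots> = (\<Sum>a<d. \<Sum>b<d. X $$ (a * d + a, b * d + b)) * (s * cnj s)"
    unfolding D_def sum.reindex[OF inj] by (simp add: sum_distrib_right)
  also have "s * cnj s = 1 / of_nat d"
    by (simp add: s_def flip: of_real_mult)
  finally show ?thesis by simp
qed

lemma ent_fidelity_kernel:
  assumes \<rho>: "\<rho> \<in> carrier_mat (d * d) (d * d)"
    and kernel: "\<And>Y a b. Y \<in> carrier_mat d d \<Longrightarrow> a < d \<Longrightarrow> b < d \<Longrightarrow>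
       N Y $$ (a, b) = (\<Sum>p<d. \<Sum>q<d. Y $$ (p, q) * K p q a b)"
  shows "ent_fidelity d N \<rho>
       = (\<Sum>a<d. \<Sum>b<d. \<Sum>p<d. \<Sum>q<d. \<rho> $$ (a * d + p, b * d + q) * K p q a b) / of_nat d"
proof -
  have "id_tensor d d N \<rho> $$ (a * d + a, b * d + b)
      = (\<Sum>p<d. \<Sum>q<d. \<rho> $$ (a * d + p, b * d + q) * K p q a b)"
    if "a < d" "b < d" for a b
  proof -
    have "id_tensor d d N \<rho> $$ (a * d + a, b * d + b) = N (block d \<rho> a b) $$ (a, b)"
      using that mult_add_less_mult[OF that(1,1)] mult_add_less_mult[OF that(2,2)]
      by (simp add: id_tensor_def)
    also have "\<dots> = (\<Sum>p<d. \<Sum>q<d. \<rho> $$ (a * d + p, b * d + q) * K p q a b)"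
      using that by (subst kernel) (simp_all add: block_def)
    finally show ?thesis .
  qed
  then show ?thesis
    unfolding ent_fidelity_def by (subst cscalar_prod_max_ent) (simp_all add: id_tensor_def)
qed

lemma ent_fidelity_channel:
  assumes "channel d N" "\<rho> \<in> carrier_mat (d * d) (d * d)"
  shows "ent_fidelity d N \<rho>
       = (\<Sum>a<d. \<Sum>b<d. \<Sum>p<d. \<Sum>q<d. \<rho> $$ (a * d + p, b * d + q) * N (unit_mat d p q) $$ (a, b))
         / of_nat d"
  by (rule ent_fidelity_kernel[OF assms(2) channel_entry[OF assms(1)]])

lemma ent_fidelity_real_nonneg:
  assumes "channel d N" "psd (d * d) \<rho>"
  shows "Im (ent_fidelity d N \<rho>) = 0" "0 \<le> Re (ent_fidelity d N \<rho>)"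
proof -
  have "psd (d * d) (id_tensor d d N \<rho>)"
    using assms unfolding channel_def by blast
  then have X: "id_tensor d d N \<rho> \<in> carrier_mat (d * d) (d * d)"
    and form: "psd_form (d * d) (\<lambda>p q. id_tensor d d N \<rho> $$ (p, q))"
    unfolding psd_iff_psd_form by blast+
  have "ent_fidelity d N \<rho> = quad_form (d * d) (\<lambda>p q. id_tensor d d N \<rho> $$ (p, q)) (($) (max_ent d))"
    unfolding ent_fidelity_def by (rule cscalar_prod_mult_mat_vec_quad_form[OF X]) (simp add: max_ent_def)
  then show "Im (ent_fidelity d N \<rho>) = 0" "0 \<le> Re (ent_fidelity d N \<rho>)"
    using quad_form_real[OF form] psd_form_nonneg[OF form] by simp_all
qed

lemma Re_ent_fidelity_le:
  assumes \<rho>: "\<rho> \<in> carrier_mat (d * d) (d * d)"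
    and kernel: "\<And>Y a b. Y \<in> carrier_mat d d \<Longrightarrow> a < d \<Longrightarrow> b < d \<Longrightarrow>
       N Y $$ (a, b) = (\<Sum>p<d. \<Sum>q<d. Y $$ (p, q) * K p q a b)"
    and entries: "\<And>i j. i < d * d \<Longrightarrow> j < d * d \<Longrightarrow> cmod (\<rho> $$ (i, j)) \<le> 1"
  shows "Re (ent_fidelity d N \<rho>) \<le> (\<Sum>a<d. \<Sum>b<d. \<Sum>p<d. \<Sum>q<d. cmod (K p q a b)) / real d"
proof -
  define S where "S = (\<Sum>a<d. \<Sum>b<d. \<Sum>p<d. \<Sum>q<d. \<rho> $$ (a * d + p, b * d + q) * K p q a b)"
  have "cmod (\<rho> $$ (a * d + p, b * d + q) * K p q a b) \<le> cmod (K p q a b)"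
    if "a \<in> {..<d}" "b \<in> {..<d}" "p \<in> {..<d}" "q \<in> {..<d}" for a b p q
    using entries[of "a * d + p" "b * d + q"] mult_add_less_mult[of a d p d]
      mult_add_less_mult[of b d q d] that
    by (simp add: norm_mult mult_left_le_one_le)
  then have bound: "cmod S \<le> (\<Sum>a<d. \<Sum>b<d. \<Sum>p<d. \<Sum>q<d. cmod (K p q a b))"
    unfolding S_def by (intro order.trans[OF norm_sum4_le] sum_mono) blast
  have "Re (ent_fidelity d N \<rho>) = Re S / real d"
    by (simp add: ent_fidelity_kernel[OF \<rho> kernel] S_def)
  also have "\<dots> \<le> cmod S / real d"
    by (intro divide_right_mono complex_Re_le_cmod) simp
  also have "\<dots> \<le> (\<Sum>a<d. \<Sum>b<d. \<Sum>p<d. \<Sum>q<d. cmod (K p q a b)) / real d"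
    by (intro divide_right_mono bound) simp
  finally show ?thesis .
qed

section \<open>Tensor products of channels and states\<close>

definition tensor_kernel :: "nat \<Rightarrow> nat \<Rightarrow> (complex mat \<Rightarrow> complex mat) \<Rightarrow> (complex mat \<Rightarrow> complex mat)
    \<Rightarrow> nat \<Rightarrow> nat \<Rightarrow> nat \<Rightarrow> nat \<Rightarrow> complex" where
  "tensor_kernel d1 d2 N1 N2 p q a b =
     N1 (unit_mat d1 (p div d2) (q div d2)) $$ (a div d2, b div d2) *
     N2 (unit_mat d2 (p mod d2) (q mod d2)) $$ (a mod d2, b mod d2)"

lemma chan_tensor_kernel:
  assumes "channel d1 N1" "channel d2 N2" "a < d1 * d2" "b < d1 * d2"
  shows "chan_tensor d1 d2 N1 N2 Y $$ (a, b)
     = (\<Sum>p<d1 * d2. \<Sum>q<d1 * d2. Y $$ (p, q) * tensor_kernel d1 d2 N1 N2 p q a b)"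
proof -
  have N1: "N1 (unit_mat d1 i j) \<in> carrier_mat d1 d1" and N2: "N2 (unit_mat d2 k l) \<in> carrier_mat d2 d2"
    for i j k l
    using assms(1,2) unfolding channel_def unit_mat_def by simp_all
  have "chan_tensor d1 d2 N1 N2 Y $$ (a, b) = (\<Sum>i<d1. \<Sum>j<d1. \<Sum>k<d2. \<Sum>l<d2.
      Y $$ (i * d2 + k, j * d2 + l) * tensor_kernel d1 d2 N1 N2 (i * d2 + k) (j * d2 + l) a b)"
    using assms(3,4) carrier_matD[OF N1] carrier_matD[OF N2]
    by (simp add: chan_tensor_def kron_def tensor_kernel_def)
  also have "\<dots> = (\<Sum>i<d1. \<Sum>k<d2. \<Sum>j<d1. \<Sum>l<d2.
      Y $$ (i * d2 + k, j * d2 + l) * tensor_kernel d1 d2 N1 N2 (i * d2 + k) (j * d2 + l) a b)"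
    by (rule sum.cong[OF refl sum.swap])
  also have "\<dots> = (\<Sum>p<d1 * d2. \<Sum>q<d1 * d2. Y $$ (p, q) * tensor_kernel d1 d2 N1 N2 p q a b)"
    by (simp only: sum_lessThan_mult)
  finally show ?thesis .
qed

definition tensor_idx1 :: "nat \<Rightarrow> nat \<Rightarrow> nat \<Rightarrow> nat" where
  "tensor_idx1 d1 d2 n = n div (d1 * d2) div d2 * d1 + n mod (d1 * d2) div d2"

definition tensor_idx2 :: "nat \<Rightarrow> nat \<Rightarrow> nat \<Rightarrow> nat" where
  "tensor_idx2 d1 d2 n = n div (d1 * d2) mod d2 * d2 + n mod (d1 * d2) mod d2"

(* rho1 (x) rho2 on r1 b1 r2 b2, with the registers regrouped to (r1 r2) (b1 b2) as chan_tensor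
   expects: the index (r1 d2 + r2) (d1 d2) + (b1 d2 + b2) corresponds to the index pair
   (r1 d1 + b1, r2 d2 + b2), computed by tensor_idx1 and tensor_idx2. *)
definition state_tensor :: "nat \<Rightarrow> nat \<Rightarrow> complex mat \<Rightarrow> complex mat \<Rightarrow> complex mat" where
  "state_tensor d1 d2 \<rho>1 \<rho>2 = mat (d1 * d2 * (d1 * d2)) (d1 * d2 * (d1 * d2)) (\<lambda>(n, m).
     \<rho>1 $$ (tensor_idx1 d1 d2 n, tensor_idx1 d1 d2 m) * \<rho>2 $$ (tensor_idx2 d1 d2 n, tensor_idx2 d1 d2 m))"

lemma tensor_idx_less:
  assumes "n < d1 * d2 * (d1 * d2)"
  shows "tensor_idx1 d1 d2 n < d1 * d1" "tensor_idx2 d1 d2 n < d2 * d2"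
proof -
  have "0 < d1 * d2" using assms by (cases "d1 * d2 = 0") auto
  then have "n div (d1 * d2) < d1 * d2" "n mod (d1 * d2) < d1 * d2" "0 < d2"
    using assms by (simp_all add: less_mult_imp_div_less)
  then show "tensor_idx1 d1 d2 n < d1 * d1" "tensor_idx2 d1 d2 n < d2 * d2"
    unfolding tensor_idx1_def tensor_idx2_def
    by (auto intro!: mult_add_less_mult simp: less_mult_imp_div_less)
qed

lemma tensor_idx_mult_add:
  assumes "p < d1 * d2"
  shows "tensor_idx1 d1 d2 (a * (d1 * d2) + p) = a div d2 * d1 + p div d2"
    "tensor_idx2 d1 d2 (a * (d1 * d2) + p) = a mod d2 * d2 + p mod d2"
proof -
  have "0 < d1 * d2" using assms by linarith
  then have "(a * (d1 * d2) + p) div (d1 * d2) = a" "(a * (d1 * d2) + p) mod (d1 * d2) = p"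
    using assms by simp_all
  then show "tensor_idx1 d1 d2 (a * (d1 * d2) + p) = a div d2 * d1 + p div d2"
    "tensor_idx2 d1 d2 (a * (d1 * d2) + p) = a mod d2 * d2 + p mod d2"
    unfolding tensor_idx1_def tensor_idx2_def by simp_all
qed

lemma sum_tensor_idx:
  "(\<Sum>n<d1 * d2 * (d1 * d2). G (tensor_idx1 d1 d2 n) (tensor_idx2 d1 d2 n))
     = (\<Sum>p<d1 * d1. \<Sum>q<d2 * d2. G p q)"
proof -
  have "(\<Sum>n<d1 * d2 * (d1 * d2). G (tensor_idx1 d1 d2 n) (tensor_idx2 d1 d2 n))
      = (\<Sum>P<d1 * d2. \<Sum>Q<d1 * d2. G (P div d2 * d1 + Q div d2) (P mod d2 * d2 + Q mod d2))"
    by (subst sum_lessThan_mult) (simp add: tensor_idx_mult_add)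
  also have "\<dots> = (\<Sum>a1<d1. \<Sum>a2<d2. \<Sum>i<d1. \<Sum>k<d2. G (a1 * d1 + i) (a2 * d2 + k))"
    by (simp add: sum_lessThan_mult[of _ d1 d2])
  also have "\<dots> = (\<Sum>a1<d1. \<Sum>i<d1. \<Sum>a2<d2. \<Sum>k<d2. G (a1 * d1 + i) (a2 * d2 + k))"
    by (rule sum.cong[OF refl sum.swap])
  also have "\<dots> = (\<Sum>p<d1 * d1. \<Sum>q<d2 * d2. G p q)"
    by (simp only: sum_lessThan_mult)
  finally show ?thesis .
qed

lemma state_tensor_carrier:
  "state_tensor d1 d2 \<rho>1 \<rho>2 \<in> carrier_mat (d1 * d2 * (d1 * d2)) (d1 * d2 * (d1 * d2))"
  unfolding state_tensor_def by simp

lemma state_tensor_index: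
  assumes "n < d1 * d2 * (d1 * d2)" "m < d1 * d2 * (d1 * d2)"
  shows "state_tensor d1 d2 \<rho>1 \<rho>2 $$ (n, m) =
    \<rho>1 $$ (tensor_idx1 d1 d2 n, tensor_idx1 d1 d2 m) * \<rho>2 $$ (tensor_idx2 d1 d2 n, tensor_idx2 d1 d2 m)"
  unfolding state_tensor_def using assms by simp

lemma psd_state_tensor:
  assumes "psd (d1 * d1) \<rho>1" "psd (d2 * d2) \<rho>2"
  shows "psd (d1 * d2 * (d1 * d2)) (state_tensor d1 d2 \<rho>1 \<rho>2)"
proof -
  obtain m1 :: nat and x where x: "\<forall>p<d1 * d1. \<forall>q<d1 * d1. \<rho>1 $$ (p, q) = (\<Sum>s<m1. x s p * cnj (x s q))"
    using psd_Gram_decomposition[OF assms(1)] by blast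
  obtain m2 :: nat and y where y: "\<forall>p<d2 * d2. \<forall>q<d2 * d2. \<rho>2 $$ (p, q) = (\<Sum>s<m2. y s p * cnj (y s q))"
    using psd_Gram_decomposition[OF assms(2)] by blast
  define z where "z st n = x (fst st) (tensor_idx1 d1 d2 n) * y (snd st) (tensor_idx2 d1 d2 n)" for st n
  have "state_tensor d1 d2 \<rho>1 \<rho>2 $$ (n, m) = (\<Sum>st\<in>{..<m1} \<times> {..<m2}. z st n * cnj (z st m))"
    if "n < d1 * d2 * (d1 * d2)" "m < d1 * d2 * (d1 * d2)" for n m
    using x y tensor_idx_less[OF that(1)] tensor_idx_less[OF that(2)]
    by (simp add: state_tensor_index[OF that] z_def sum_product sum.cartesian_product split_def mult_ac)
  then have "psd_form (d1 * d2 * (d1 * d2)) (\<lambda>n m. state_tensor d1 d2 \<rho>1 \<rho>2 $$ (n, m))"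
    by (intro psd_form_Gram[of "{..<m1} \<times> {..<m2}"]) auto
  then show ?thesis
    unfolding psd_iff_psd_form using state_tensor_carrier by blast
qed

lemma mtrace_state_tensor:
  assumes "\<rho>1 \<in> carrier_mat (d1 * d1) (d1 * d1)" "\<rho>2 \<in> carrier_mat (d2 * d2) (d2 * d2)"
  shows "mtrace (state_tensor d1 d2 \<rho>1 \<rho>2) = mtrace \<rho>1 * mtrace \<rho>2"
  using assms sum_tensor_idx[where G = "\<lambda>p q. \<rho>1 $$ (p, p) * \<rho>2 $$ (q, q)"]
  by (simp add: mtrace_def state_tensor_def sum_product)

lemma mtrace_mult_self_state_tensor:
  assumes "\<rho>1 \<in> carrier_mat (d1 * d1) (d1 * d1)" "\<rho>2 \<in> carrier_mat (d2 * d2) (d2 * d2)"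
  defines "P \<equiv> state_tensor d1 d2 \<rho>1 \<rho>2"
  shows "mtrace (P * P) = mtrace (\<rho>1 * \<rho>1) * mtrace (\<rho>2 * \<rho>2)"
proof -
  let ?N = "d1 * d2 * (d1 * d2)" and ?i1 = "tensor_idx1 d1 d2" and ?i2 = "tensor_idx2 d1 d2"
  define U where "U a p = \<rho>1 $$ (a, p) * \<rho>1 $$ (p, a)" for a p
  define V where "V b q = \<rho>2 $$ (b, q) * \<rho>2 $$ (q, b)" for b q
  have "mtrace (P * P) = (\<Sum>n<?N. \<Sum>m<?N. U (?i1 n) (?i1 m) * V (?i2 n) (?i2 m))"
    unfolding mtrace_mult_self[OF state_tensor_carrier[of d1 d2 \<rho>1 \<rho>2, folded P_def]]
    by (intro sum.cong refl) (simp add: P_def state_tensor_index U_def V_def mult_ac)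
  also have "\<dots> = (\<Sum>n<?N. \<Sum>p<d1 * d1. \<Sum>q<d2 * d2. U (?i1 n) p * V (?i2 n) q)"
    by (rule sum.cong[OF refl sum_tensor_idx])
  also have "\<dots> = (\<Sum>a<d1 * d1. \<Sum>b<d2 * d2. \<Sum>p<d1 * d1. \<Sum>q<d2 * d2. U a p * V b q)"
    by (rule sum_tensor_idx)
  also have "\<dots> = (\<Sum>a<d1 * d1. \<Sum>p<d1 * d1. U a p) * (\<Sum>b<d2 * d2. \<Sum>q<d2 * d2. V b q)"
    by (simp only: sum_product)
  also have "\<dots> = mtrace (\<rho>1 * \<rho>1) * mtrace (\<rho>2 * \<rho>2)"
    unfolding mtrace_mult_self[OF assms(1)] mtrace_mult_self[OF assms(2)] U_def V_def ..
  finally show ?thesis .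
qed

lemma density_op_state_tensor:
  assumes "density_op (d1 * d1) \<rho>1" "density_op (d2 * d2) \<rho>2"
  shows "density_op (d1 * d2 * (d1 * d2)) (state_tensor d1 d2 \<rho>1 \<rho>2)"
proof -
  have psd: "psd (d1 * d1) \<rho>1" "psd (d2 * d2) \<rho>2" and "mtrace \<rho>1 = 1" "mtrace \<rho>2 = 1"
    using assms unfolding density_op_def by blast+
  moreover have "\<rho>1 \<in> carrier_mat (d1 * d1) (d1 * d1)" "\<rho>2 \<in> carrier_mat (d2 * d2) (d2 * d2)"
    using psd unfolding psd_def by blast+
  ultimately show ?thesis
    unfolding density_op_def using psd_state_tensor mtrace_state_tensor by simp
qed

lemma ent_fidelity_state_tensor:
  assumes ch1: "channel d1 N1" and ch2: "channel d2 N2"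
    and \<rho>1: "\<rho>1 \<in> carrier_mat (d1 * d1) (d1 * d1)" and \<rho>2: "\<rho>2 \<in> carrier_mat (d2 * d2) (d2 * d2)"
  shows "ent_fidelity (d1 * d2) (chan_tensor d1 d2 N1 N2) (state_tensor d1 d2 \<rho>1 \<rho>2)
       = ent_fidelity d1 N1 \<rho>1 * ent_fidelity d2 N2 \<rho>2"
proof -
  let ?D = "d1 * d2" and ?P = "state_tensor d1 d2 \<rho>1 \<rho>2"
  define F1 where "F1 a b p q = \<rho>1 $$ (a * d1 + p, b * d1 + q) * N1 (unit_mat d1 p q) $$ (a, b)"
    for a b p q
  define F2 where "F2 a b p q = \<rho>2 $$ (a * d2 + p, b * d2 + q) * N2 (unit_mat d2 p q) $$ (a, b)"
    for a b p q
  have "?P $$ (a * ?D + p, b * ?D + q) * tensor_kernel d1 d2 N1 N2 p q a b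
      = F1 (a div d2) (b div d2) (p div d2) (q div d2) * F2 (a mod d2) (b mod d2) (p mod d2) (q mod d2)"
    if "a \<in> {..<?D}" "b \<in> {..<?D}" "p \<in> {..<?D}" "q \<in> {..<?D}" for a b p q
    using that mult_add_less_mult[of a ?D p ?D] mult_add_less_mult[of b ?D q ?D]
    by (simp add: state_tensor_index tensor_idx_mult_add tensor_kernel_def F1_def F2_def mult_ac)
  then have "ent_fidelity ?D (chan_tensor d1 d2 N1 N2) ?P = (\<Sum>a<?D. \<Sum>b<?D. \<Sum>p<?D. \<Sum>q<?D.
      F1 (a div d2) (b div d2) (p div d2) (q div d2) * F2 (a mod d2) (b mod d2) (p mod d2) (q mod d2))
      / of_nat ?D"
    using ent_fidelity_kernel[OF state_tensor_carrier chan_tensor_kernel[OF ch1 ch2]] by simp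
  also have "\<dots> = (\<Sum>a<d1. \<Sum>b<d1. \<Sum>p<d1. \<Sum>q<d1. F1 a b p q) / of_nat d1
      * ((\<Sum>a<d2. \<Sum>b<d2. \<Sum>p<d2. \<Sum>q<d2. F2 a b p q) / of_nat d2)"
    unfolding sum4_div_mod_mult of_nat_mult times_divide_times_eq ..
  also have "\<dots> = ent_fidelity d1 N1 \<rho>1 * ent_fidelity d2 N2 \<rho>2"
    by (simp only: F1_def F2_def ent_fidelity_channel[OF ch1 \<rho>1] ent_fidelity_channel[OF ch2 \<rho>2])
  finally show ?thesis .
qed

section \<open>Supermultiplicativity\<close>

lemma cSup_mult_cSup_le:
  fixes A B C :: "real set"
  assumes A: "A \<noteq> {}" "bdd_above A" "\<forall>x\<in>A. 0 \<le> x"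
    and B: "B \<noteq> {}" "bdd_above B" "\<forall>y\<in>B. 0 \<le> y"
    and C: "bdd_above C" and AB: "\<forall>x\<in>A. \<forall>y\<in>B. x * y \<in> C"
  shows "Sup A * Sup B \<le> Sup C"
proof -
  obtain x0 y0 where x0: "x0 \<in> A" and y0: "y0 \<in> B"
    using A(1) B(1) by blast
  have xy: "x * y \<le> Sup C" if "x \<in> A" "y \<in> B" for x y
    using AB that C by (auto intro: cSup_upper)
  have "0 \<le> Sup C"
    using xy[OF x0 y0] A(3) B(3) x0 y0 by (meson mult_nonneg_nonneg order_trans)
  have SupA_y: "Sup A * y \<le> Sup C" if y: "y \<in> B" for y
  proof (cases "y = 0")
    case True
    then show ?thesis using \<open>0 \<le> Sup C\<close> by simp
  next
    case False
    then have "0 < y" using B(3) y by force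
    have "Sup A \<le> Sup C / y"
      by (rule cSup_least[OF A(1)]) (use xy[OF _ y] \<open>0 < y\<close> in \<open>simp add: pos_le_divide_eq\<close>)
    then show ?thesis using \<open>0 < y\<close> by (simp add: pos_le_divide_eq)
  qed
  have "0 \<le> Sup A"
    using x0 A by (meson cSup_upper order_trans)
  show ?thesis
  proof (cases "Sup A = 0")
    case True
    then show ?thesis using \<open>0 \<le> Sup C\<close> by simp
  next
    case False
    then have "0 < Sup A" using \<open>0 \<le> Sup A\<close> by simp
    have "Sup B \<le> Sup C / Sup A"
      by (rule cSup_least[OF B(1)]) (use SupA_y \<open>0 < Sup A\<close> in \<open>simp add: pos_le_divide_eq mult.commute\<close>)
    then show ?thesis using \<open>0 < Sup A\<close> by (simp add: pos_le_divide_eq mult.commute)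
  qed
qed

definition fidelity_values :: "nat \<Rightarrow> (complex mat \<Rightarrow> complex mat) \<Rightarrow> real \<Rightarrow> real set" where
  "fidelity_values d N s =
     {Re (ent_fidelity d N \<rho>) | \<rho>. density_op (d * d) \<rho> \<and> Re (mtrace (\<rho> * \<rho>)) \<le> s}"

lemma O_val_eq_Sup: "O_val d N s = Sup (fidelity_values d N s)"
  unfolding O_val_def fidelity_values_def ent_fidelity_def ..

lemma bdd_above_fidelity_values:
  assumes "s \<le> 1"
    and kernel: "\<And>Y a b. Y \<in> carrier_mat d d \<Longrightarrow> a < d \<Longrightarrow> b < d \<Longrightarrow>
       N Y $$ (a, b) = (\<Sum>p<d. \<Sum>q<d. Y $$ (p, q) * K p q a b)"
  shows "bdd_above (fidelity_values d N s)"
proof (rule bdd_aboveI)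
  fix x assume "x \<in> fidelity_values d N s"
  then obtain \<rho> where x: "x = Re (ent_fidelity d N \<rho>)" and "psd (d * d) \<rho>"
    and pur: "Re (mtrace (\<rho> * \<rho>)) \<le> s"
    unfolding fidelity_values_def density_op_def by blast
  have entries: "cmod (\<rho> $$ (i, j)) \<le> 1" if "i < d * d" "j < d * d" for i j
    by (rule psd_entry_norm_le_1[OF \<open>psd (d * d) \<rho>\<close> _ that]) (use pur \<open>s \<le> 1\<close> in linarith)
  have "\<rho> \<in> carrier_mat (d * d) (d * d)"
    using \<open>psd (d * d) \<rho>\<close> unfolding psd_def by blast
  then show "x \<le> (\<Sum>a<d. \<Sum>b<d. \<Sum>p<d. \<Sum>q<d. cmod (K p q a b)) / real d"
    unfolding x by (rule Re_ent_fidelity_le[OF _ kernel entries])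
qed

lemma fidelity_values_nonneg: "channel d N \<Longrightarrow> x \<in> fidelity_values d N s \<Longrightarrow> 0 \<le> x"
  unfolding fidelity_values_def density_op_def using ent_fidelity_real_nonneg(2) by blast

lemma fidelity_values_nonempty:
  assumes "0 < d" "1 / real d ^ 2 \<le> s"
  shows "fidelity_values d N s \<noteq> {}"
proof -
  have "0 < d * d" using assms(1) by simp
  then have "density_op (d * d) (max_mixed (d * d))"
    and "Re (mtrace (max_mixed (d * d) * max_mixed (d * d))) \<le> s"
    using max_mixed_density_op_purity[of "d * d"] assms(2) by (simp_all add: power2_eq_square)
  then show ?thesis
    unfolding fidelity_values_def by blast
qed

lemma mult_mem_fidelity_values_chan_tensor:
  assumes ch1: "channel d1 N1" and ch2: "channel d2 N2" and "s * s \<le> t"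
    and "x \<in> fidelity_values d1 N1 s" "y \<in> fidelity_values d2 N2 s"
  shows "x * y \<in> fidelity_values (d1 * d2) (chan_tensor d1 d2 N1 N2) t"
proof -
  obtain \<rho>1 where x: "x = Re (ent_fidelity d1 N1 \<rho>1)" and dens1: "density_op (d1 * d1) \<rho>1"
    and pur1: "Re (mtrace (\<rho>1 * \<rho>1)) \<le> s"
    using assms(4) unfolding fidelity_values_def by blast
  obtain \<rho>2 where y: "y = Re (ent_fidelity d2 N2 \<rho>2)" and dens2: "density_op (d2 * d2) \<rho>2"
    and pur2: "Re (mtrace (\<rho>2 * \<rho>2)) \<le> s"
    using assms(5) unfolding fidelity_values_def by blast
  have psd1: "psd (d1 * d1) \<rho>1" and psd2: "psd (d2 * d2) \<rho>2"
    using dens1 dens2 unfolding density_op_def by blast+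
  then have \<rho>1: "\<rho>1 \<in> carrier_mat (d1 * d1) (d1 * d1)" and \<rho>2: "\<rho>2 \<in> carrier_mat (d2 * d2) (d2 * d2)"
    unfolding psd_def by blast+
  define P where "P = state_tensor d1 d2 \<rho>1 \<rho>2"
  have "Re (mtrace (P * P)) = Re (mtrace (\<rho>1 * \<rho>1)) * Re (mtrace (\<rho>2 * \<rho>2))"
    unfolding P_def mtrace_mult_self_state_tensor[OF \<rho>1 \<rho>2]
    by (simp add: mtrace_mult_self_psd[OF psd1] mtrace_mult_self_psd[OF psd2] flip: of_real_mult)
  also have "\<dots> \<le> s * s"
    using pur1 pur2 Re_mtrace_mult_self_nonneg[OF psd2] by (intro mult_mono) auto
  finally have "Re (mtrace (P * P)) \<le> t"
    using \<open>s * s \<le> t\<close> by simp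
  moreover have "x * y = Re (ent_fidelity (d1 * d2) (chan_tensor d1 d2 N1 N2) P)"
    using ent_fidelity_state_tensor[OF ch1 ch2 \<rho>1 \<rho>2] x y
      ent_fidelity_real_nonneg(1)[OF ch1 psd1] ent_fidelity_real_nonneg(1)[OF ch2 psd2]
    by (simp add: P_def)
  ultimately show ?thesis
    using density_op_state_tensor[OF dens1 dens2]
    unfolding fidelity_values_def P_def by blast
qed

lemma O_val_chan_tensor_ge:
  assumes "0 < d1" "0 < d2" and ch1: "channel d1 N1" and ch2: "channel d2 N2"
    and "s \<le> 1" "s * s \<le> t" "t \<le> 1" "1 / real d1 ^ 2 \<le> s" "1 / real d2 ^ 2 \<le> s"
  shows "O_val d1 N1 s * O_val d2 N2 s \<le> O_val (d1 * d2) (chan_tensor d1 d2 N1 N2) t"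
  unfolding O_val_eq_Sup
proof (rule cSup_mult_cSup_le)
  show "fidelity_values d1 N1 s \<noteq> {}" "fidelity_values d2 N2 s \<noteq> {}"
    using assms by (simp_all add: fidelity_values_nonempty)
  show "bdd_above (fidelity_values d1 N1 s)"
    by (rule bdd_above_fidelity_values[OF \<open>s \<le> 1\<close> channel_entry[OF ch1]])
  show "bdd_above (fidelity_values d2 N2 s)"
    by (rule bdd_above_fidelity_values[OF \<open>s \<le> 1\<close> channel_entry[OF ch2]])
  show "bdd_above (fidelity_values (d1 * d2) (chan_tensor d1 d2 N1 N2) t)"
    by (rule bdd_above_fidelity_values[OF \<open>t \<le> 1\<close> chan_tensor_kernel[OF ch1 ch2]])
  show "\<forall>x\<in>fidelity_values d1 N1 s. 0 \<le> x" "\<forall>y\<in>fidelity_values d2 N2 s. 0 \<le> y"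
    using fidelity_values_nonneg[OF ch1] fidelity_values_nonneg[OF ch2] by blast+
  show "\<forall>x\<in>fidelity_values d1 N1 s. \<forall>y\<in>fidelity_values d2 N2 s.
      x * y \<in> fidelity_values (d1 * d2) (chan_tensor d1 d2 N1 N2) t"
    using mult_mem_fidelity_values_chan_tensor[OF ch1 ch2 \<open>s * s \<le> t\<close>] by blast
qed

theorem mainTheorem7:
  fixes d1 d2 :: nat and N1 N2 :: "complex mat \<Rightarrow> complex mat" and t :: real
  assumes "0 < d1" and "0 < d2"
    and "channel d1 N1" and "channel d2 N2"
    and "0 < t" and "t \<le> 1"
  shows "(t \<ge> max (1 / real d1 ^ 2) (1 / real d2 ^ 2) \<longrightarrow>
           O_val (d1 * d2) (chan_tensor d1 d2 N1 N2) t \<ge> O_val d1 N1 t * O_val d2 N2 t)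
       \<and> (sqrt t \<ge> max (1 / real d1 ^ 2) (1 / real d2 ^ 2) \<longrightarrow>
           O_val (d1 * d2) (chan_tensor d1 d2 N1 N2) t \<ge> O_val d1 N1 (sqrt t) * O_val d2 N2 (sqrt t))"
proof (intro conjI impI)
  assume "t \<ge> max (1 / real d1 ^ 2) (1 / real d2 ^ 2)"
  moreover have "t * t \<le> t"
    using assms(5,6) by (simp add: mult_left_le_one_le)
  ultimately show "O_val (d1 * d2) (chan_tensor d1 d2 N1 N2) t \<ge> O_val d1 N1 t * O_val d2 N2 t"
    using assms(1-4,6) by (intro O_val_chan_tensor_ge) auto
next
  assume "sqrt t \<ge> max (1 / real d1 ^ 2) (1 / real d2 ^ 2)"
  moreover have "sqrt t \<le> 1" "sqrt t * sqrt t \<le> t"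
    using assms(5,6) by simp_all
  ultimately show "O_val (d1 * d2) (chan_tensor d1 d2 N1 N2) t \<ge> O_val d1 N1 (sqrt t) * O_val d2 N2 (sqrt t)"
    using assms(1-4,6) by (intro O_val_chan_tensor_ge) auto
qed

end
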